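(* The diamond product $\diamond$ and the shuffle product $\sqcup\!\sqcup$ on $\mathfrak D$ are commutative.
   Context: Let $q$ be a prime power. Let $\Gamma=\{x_{n,\varepsilon}\}_{n\in\mathbb N,\varepsilon\in\mathbb F_q^*}$ be an alphabet with weights $w(x_{n,\varepsilon})=n$, $\langle\Gamma\rangle$ the set of words over $\Gamma$ (empty word $1$, juxtaposition = concatenation) and $\mathfrak D$ the $\mathbb F_q$-vector space with basis $\langle\Gamma\rangle$; write $x_n:=x_{n,1}$. For positive integers $r,s,j$ put $\Delta^j_{r,s}=(-1)^{r-1}\binom{j-1}{r-1}+(-1)^{s-1}\binom{j-1}{s-1}$ if $(q-1)\mid j$ and $0$ otherwise. The bilinear products $\diamond,\sqcup\!\sqcup$ on $\mathfrak D$ are defined recursively by $1\diamond\mathfrak a=\mathfrak a\diamond1=\mathfrak a$, $1\sqcup\!\sqcup\mathfrak a=\mathfrak a\sqcup\!\sqcup1=\mathfrak a$ and, for nonempty words $\mathfrak a=x_{a,\alpha}\mathfrak a_-$, $\mathfrak b=x_{b,\beta}\mathfrak b_-$: $\mathfrak a\diamond\mathfrak b=x_{a+b,\alpha\beta}(\mathfrak a_-\sqcup\!\sqcup\mathfrak b_-)+\sum_{i+j=a+b}\Delta^j_{a,b}x_{i,\alpha\beta}(x_j\sqcup\!\sqcup(\mathfrak a_-\sqcup\!\sqcup\mathfrak b_-))$ and $\mathfrak a\sqcup\!\sqcup\mathfrak b=x_{a,\alpha}(\mathfrak a_-\sqcup\!\sqcup\mathfrak b)+x_{b,\beta}(\mathfrak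 a\sqcup\!\sqcup\mathfrak b_-)+\mathfrak a\diamond\mathfrak b$ ($i,j$ positive integers). *)

theory Defs
  imports Main
begin

text \<open>The base field F_q is modelled by an arbitrary finite field type 'k
  (every finite field is F_q with q = CARD('k), a prime power).
  A letter x_{n,eps} is the pair (n, eps); a word is a list of letters;
  the F_q-vector space D with basis the words is modelled by functions
  word => 'k with finite support (coefficient of each word).\<close>

type_synonym 'k letter = "nat \<times> 'k"
type_synonym 'k word = "'k letter list"
type_synonym 'k D = "'k word \<Rightarrow> 'k"

definition valid_letter :: "('k::field) letter \<Rightarrow> bool" where
  "valid_letter l \<longleftrightarrow> fst l \<ge> 1 \<and> snd l \<noteq> 0"

definition valid_word :: "('k::field) word \<Rightarrow> bool" where
  "valid_word w \<longleftrightarrow> (\<forall>l\<in>set w. valid_letter l)"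

definition supp :: "('k::zero) D \<Rightarrow> 'k word set" where
  "supp x = {w. x w \<noteq> 0}"

definition inD :: "('k::field) D \<Rightarrow> bool" where
  "inD x \<longleftrightarrow> finite (supp x) \<and> (\<forall>w\<in>supp x. valid_word w)"

definition basis :: "('k::field) word \<Rightarrow> 'k D" where
  "basis w = (\<lambda>v. if v = w then 1 else 0)"

definition prepend :: "('k::field) letter \<Rightarrow> 'k D \<Rightarrow> 'k D" where
  "prepend l c = (\<lambda>v. case v of [] \<Rightarrow> 0 | l' # v' \<Rightarrow> if l' = l then c v' else 0)"

definition ext2 :: "('k word \<Rightarrow> 'k word \<Rightarrow> ('k::field) D) \<Rightarrow> 'k word \<Rightarrow> 'k D \<Rightarrow> 'k D" where
  "ext2 F a c = (\<lambda>v. \<Sum>w\<in>supp c. c w * F a w v)"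

definition Delta :: "nat \<Rightarrow> nat \<Rightarrow> nat \<Rightarrow> nat \<Rightarrow> int" where
  "Delta q r s j = (if (q - 1) dvd j
      then (-1) ^ (r - 1) * int ((j - 1) choose (r - 1)) + (-1) ^ (s - 1) * int ((j - 1) choose (s - 1))
      else 0)"

text \<open>The mutually recursive definitions, with an explicit fuel parameter
  (the recursion is nested, so we recurse on fuel; with enough fuel the value
  is the one given by the recursive definition in the paper).\<close>
fun shf :: "nat \<Rightarrow> ('k::{field,finite}) word \<Rightarrow> 'k word \<Rightarrow> 'k D"
and dmf :: "nat \<Rightarrow> ('k::{field,finite}) word \<Rightarrow> 'k word \<Rightarrow> 'k D" where
  "shf 0 a b = (\<lambda>_. 0)"
| "shf (Suc n) [] b = basis b"
| "shf (Suc n) (x # a) [] = basis (x # a)"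
| "shf (Suc n) (x # a) (y # b) =
     (\<lambda>v. prepend x (shf n a (y # b)) v + prepend y (shf n (x # a) b) v + dmf n (x # a) (y # b) v)"
| "dmf 0 a b = (\<lambda>_. 0)"
| "dmf (Suc n) [] b = basis b"
| "dmf (Suc n) (x # a) [] = basis (x # a)"
| "dmf (Suc n) ((r, \<alpha>) # a) ((s, \<beta>) # b) =
     (\<lambda>v. prepend (r + s, \<alpha> * \<beta>) (shf n a b) v
        + (\<Sum>j\<in>{1..<r + s}. of_int (Delta (card (UNIV :: 'k set)) r s j) *
              prepend (r + s - j, \<alpha> * \<beta>) (ext2 (shf n) [(j, 1)] (shf n a b)) v))"

definition shuffle_w :: "('k::{field,finite}) word \<Rightarrow> 'k word \<Rightarrow> 'k D" where
  "shuffle_w a b = shf (2 * (length a + length b) + 2) a b"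

definition diamond_w :: "('k::{field,finite}) word \<Rightarrow> 'k word \<Rightarrow> 'k D" where
  "diamond_w a b = dmf (2 * (length a + length b) + 1) a b"

definition shuffle :: "('k::{field,finite}) D \<Rightarrow> 'k D \<Rightarrow> 'k D" where
  "shuffle x y = (\<lambda>v. \<Sum>a\<in>supp x. \<Sum>b\<in>supp y. x a * y b * shuffle_w a b v)"

definition diamond :: "('k::{field,finite}) D \<Rightarrow> 'k D \<Rightarrow> 'k D" where
  "diamond x y = (\<lambda>v. \<Sum>a\<in>supp x. \<Sum>b\<in>supp y. x a * y b * diamond_w a b v)"

end

theory Submission
  imports Defs
begin

text \<open>Both recurrences are symmetric under exchanging the two words: in the shuffle
  recurrence the two prepend terms trade places, and in the diamond recurrence
  the leading letter x_{a+b, alpha beta} and the coefficients Delta^j_{a,b} are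
  symmetric in the two letters.\<close>

lemma Delta_commute: "Delta q r s j = Delta q s r j"
  unfolding Delta_def by (simp add: add.commute)

lemma shf_dmf_commute: "shf n a b = shf n b a \<and> dmf n a b = dmf n b a"
proof (induction n arbitrary: a b)
  case 0
  then show ?case by simp
next
  case (Suc n)
  consider "a = [] \<or> b = []"
    | r \<alpha> a' s \<beta> b' where "a = (r, \<alpha>) # a'" and "b = (s, \<beta>) # b'"
    by (metis list.exhaust prod.exhaust)
  then show ?case
  proof cases
    case 1
    then show ?thesis by (cases a; cases b) auto
  next
    case (2 r \<alpha> a' s \<beta> b')
    have "shf (Suc n) a b = shf (Suc n) b a"
      using 2 Suc.IH by (simp add: add.commute)
    moreover have "dmf (Suc n) a b = dmf (Suc n) b a"
      using 2 Suc.IH[of a' b'] by (simp add: add.commute mult.commute Delta_commute)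
    ultimately show ?thesis ..
  qed
qed

lemma shuffle_w_commute: "shuffle_w a b = shuffle_w b a"
  unfolding shuffle_w_def by (metis shf_dmf_commute add.commute)

lemma diamond_w_commute: "diamond_w a b = diamond_w b a"
  unfolding diamond_w_def by (metis shf_dmf_commute add.commute)

lemma bilinear_extension_commute:
  fixes F :: "'a \<Rightarrow> 'a \<Rightarrow> 'b \<Rightarrow> 'k::comm_semiring_0"
  assumes "\<And>a b. F a b = F b a"
  shows "(\<Sum>a\<in>A. \<Sum>b\<in>B. x a * y b * F a b v) = (\<Sum>a\<in>B. \<Sum>b\<in>A. y a * x b * F a b v)"
  by (subst sum.swap) (simp add: assms mult.commute)

theorem proposition5p1:
  fixes x y :: "('k::{field,finite}) D"
  assumes "inD x" and "inD y"
  shows "diamond x y = diamond y x \<and> shuffle x y = shuffle y x"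
  unfolding diamond_def shuffle_def
  by (intro conjI ext bilinear_extension_commute diamond_w_commute shuffle_w_commute)

end
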